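(* Under the standing setup, $0<\gamma_F<1$, $\|(A-LC)^k\|\le\kappa_F\gamma_F^k$ for every integer $k\ge0$, and $\|L\|\le\kappa_F$.
   Context: Standing setup. Consider the discrete-time LTI system $x_{t+1}=Ax_t+w_t$, $y_t=Cx_t+v_t$ ($t\ge0$) with $x_t\in\mathbb R^n$, $y_t\in\mathbb R^p$, $x_0=0$, $w_t\overset{iid}{\sim}\mathcal N(0,W)$, $v_t\overset{iid}{\sim}\mathcal N(0,V)$, the two noise sequences independent. Assume $(A,W^{1/2})$ is stabilizable and $(A,C)$ is detectable. Let $\Sigma\succeq0$ be the unique positive semidefinite solution of $\Sigma=A\Sigma A^\top-A\Sigma C^\top(C\Sigma C^\top+V)^{-1}C\Sigma A^\top+W$ and $L=A\Sigma C^\top(C\Sigma C^\top+V)^{-1}$. Known constants $\alpha_0,\alpha_1,\psi,\bar\sigma>0$ satisfy $\alpha_0I_n\preceq W\preceq\alpha_1I_n$, $\alpha_0I_p\preceq V\preceq\alpha_1I_p$, $\|C\|\le\psi$, $\|\Sigma\|\le\bar\sigma$. Set $\kappa_F=\sqrt{\bar\sigma/\alpha_0}$ and $\gamma_F=1-\frac{\alpha_0}{2\bar\sigma}$. $\|\cdot\|$ is the Euclidean/spectral norm and $\|\cdot\|_F$ the Frobenius norm. *)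

theory Defs
  imports "HOL-Analysis.Analysis"
begin

primrec mat_pow :: "real^'n^'n \<Rightarrow> nat \<Rightarrow> real^'n^'n" where
  "mat_pow M 0 = mat 1"
| "mat_pow M (Suc k) = M ** mat_pow M k"

definition spec_norm :: "real^'n^'m \<Rightarrow> real" where
  "spec_norm M = onorm (\<lambda>x. M *v x)"

definition psd :: "real^'n^'n \<Rightarrow> bool" where
  "psd M \<longleftrightarrow> transpose M = M \<and> (\<forall>x. 0 \<le> x \<bullet> (M *v x))"

definition loewner_le :: "real^'n^'n \<Rightarrow> real^'n^'n \<Rightarrow> bool" where
  "loewner_le M N \<longleftrightarrow> psd (N - M)"

definition cmat :: "real^'n^'m \<Rightarrow> complex^'n^'m" where
  "cmat M = (\<chi> i j. complex_of_real (M $ i $ j))"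

definition schur_stable :: "real^'n^'n \<Rightarrow> bool" where
  "schur_stable M \<longleftrightarrow>
     (\<forall>(c::complex) (v::complex^'n). v \<noteq> 0 \<and> cmat M *v v = c *s v \<longrightarrow> cmod c < 1)"

definition stabilizable :: "real^'n^'n \<Rightarrow> real^'m^'n \<Rightarrow> bool" where
  "stabilizable A B \<longleftrightarrow> (\<exists>K :: real^'n^'m. schur_stable (A + B ** K))"

definition detectable :: "real^'n^'n \<Rightarrow> real^'n^'p \<Rightarrow> bool" where
  "detectable A C \<longleftrightarrow> (\<exists>L :: real^'p^'n. schur_stable (A - L ** C))"

definition psd_sqrt :: "real^'n^'n \<Rightarrow> real^'n^'n" where
  "psd_sqrt W = (THE B. psd B \<and> B ** B = W)"

end

theory Submission
  imports Defs
begin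

(* Substituting the gain L into the Riccati equation yields the Joseph form
   \<Sigma> = F \<Sigma> F\<^sup>T + L V L\<^sup>T + W with F = A - L C.  Hence the quadratic form of \<Sigma> is a
   Lyapunov function for F\<^sup>T: it drops by at least \<alpha>\<^sub>0 |y|\<^sup>2 + \<alpha>\<^sub>0 |L\<^sup>T y|\<^sup>2, and as it is
   squeezed between \<alpha>\<^sub>0 |y|\<^sup>2 and \<sigma> |y|\<^sup>2 it contracts by 1 - \<alpha>\<^sub>0/\<sigma> \<le> \<gamma>\<^sub>F\<^sup>2 per step.
   Both norm bounds follow by passing to transposes. *)

(* keep "transpose M *v x" as it is instead of rewriting it to "x v* M" *)
declare transpose_matrix_vector [simp del] vector_transpose_matrix [simp del]

lemma inner_matrix_vector_transpose:
  "(x::real^'m) \<bullet> ((M::real^'n^'m) *v y) = (transpose M *v x) \<bullet> y"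
  by (simp add: dot_lmul_matrix transpose_matrix_vector)

lemma transpose_add: "transpose ((A::'a::semiring_1^'n^'m) + B) = transpose A + transpose B"
  by (simp add: transpose_def vec_eq_iff)

lemma transpose_diff: "transpose ((A::'a::ring_1^'n^'m) - B) = transpose A - transpose B"
  by (simp add: transpose_def vec_eq_iff)

lemma matrix_add_rdistrib: "((A::'a::semiring_1^'n^'m) + B) ** C = A ** C + B ** C"
  by (simp add: matrix_matrix_mult_def vec_eq_iff sum.distrib distrib_right)

lemma matrix_diff_ldistrib: "(A::'a::ring_1^'n^'m) ** (B - C) = A ** B - A ** C"
  by (simp add: matrix_matrix_mult_def vec_eq_iff sum_subtractf right_diff_distrib)

lemma matrix_diff_rdistrib: "((A::'a::ring_1^'n^'m) - B) ** C = A ** C - B ** C"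
  by (simp add: matrix_matrix_mult_def vec_eq_iff sum_subtractf left_diff_distrib)

lemma scaleR_mat_1_matrix_vector: "((c::real) *\<^sub>R mat 1) *v (x::real^'n) = c *\<^sub>R x"
  using matrix_scaleR_vector_ac[of "mat 1" c x] by simp

lemma matrix_inv_inverse:
  fixes S :: "'a::field^'n^'n"
  assumes "invertible S"
  shows "S ** matrix_inv S = mat 1" "matrix_inv S ** S = mat 1"
  using someI_ex[OF assms[unfolded invertible_def]] by (simp_all add: matrix_inv_def)

lemma transpose_matrix_inv_symmetric:
  fixes S :: "real^'n^'n"
  assumes "invertible S" "transpose S = S"
  shows "transpose (matrix_inv S) = matrix_inv S"
proof -
  have "transpose (matrix_inv S) ** S = mat 1"
    by (metis assms matrix_inv_inverse(1) matrix_transpose_mul transpose_mat)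
  then have "transpose (matrix_inv S) = (transpose (matrix_inv S) ** S) ** matrix_inv S"
    by (metis assms(1) matrix_inv_inverse(1) matrix_mul_assoc matrix_mul_rid)
  with \<open>transpose (matrix_inv S) ** S = mat 1\<close> show ?thesis by simp
qed

lemma quadratic_form_congruence:
  fixes M :: "real^'n^'m" and N :: "real^'n^'n"
  shows "x \<bullet> ((M ** N ** transpose M) *v x) = (transpose M *v x) \<bullet> (N *v (transpose M *v x))"
  by (simp add: inner_matrix_vector_transpose flip: matrix_vector_mul_assoc)

lemma quadratic_form_ge_of_loewner_le:
  "loewner_le (a *\<^sub>R mat 1) (M::real^'n^'n) \<Longrightarrow> a * norm x ^ 2 \<le> x \<bullet> (M *v x)"
  unfolding loewner_le_def psd_def
  by (auto simp: matrix_vector_mult_diff_rdistrib scaleR_mat_1_matrix_vector inner_diff_right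
      power2_norm_eq_inner)

lemma invertible_of_coercive:
  fixes S :: "real^'n^'n"
  assumes "0 < a" "\<And>x. a * norm x ^ 2 \<le> x \<bullet> (S *v x)"
  shows "invertible S"
  unfolding invertible_left_inverse matrix_left_invertible_ker
proof (intro allI impI)
  fix x assume "S *v x = 0"
  with assms(2)[of x] have "a * norm x ^ 2 \<le> 0" by simp
  with assms(1) show "x = 0" by (simp add: mult_le_0_iff)
qed

lemma quadratic_bounds_le:
  fixes P :: "real^'n^'n"
  assumes "\<And>y. a * norm y ^ 2 \<le> y \<bullet> (P *v y)" "\<And>y. y \<bullet> (P *v y) \<le> b * norm y ^ 2"
  shows "a \<le> b"
  using assms[of "axis undefined 1"] by simp

lemma spec_norm_nonneg: "0 \<le> spec_norm (M::real^'n^'m)"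
  unfolding spec_norm_def by (rule onorm_pos_le) simp

lemma norm_matrix_vector_le_spec_norm: "norm ((M::real^'n^'m) *v x) \<le> spec_norm M * norm x"
  unfolding spec_norm_def by (rule onorm) simp

lemma quadratic_form_le_spec_norm: "(x::real^'n) \<bullet> (M *v x) \<le> spec_norm M * norm x ^ 2"
proof -
  have "x \<bullet> (M *v x) \<le> norm x * norm (M *v x)"
    using Cauchy_Schwarz_ineq2 abs_ge_self order_trans by blast
  also have "\<dots> \<le> norm x * (spec_norm M * norm x)"
    by (simp add: norm_matrix_vector_le_spec_norm mult_left_mono)
  finally show ?thesis by (simp add: power2_eq_square algebra_simps)
qed

lemma spec_norm_le_transpose: "spec_norm (M::real^'n^'m) \<le> spec_norm (transpose M)"
  unfolding spec_norm_def[of M]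
proof (rule onorm_le)
  fix x
  let ?c = "spec_norm (transpose M)"
  have "norm (M *v x) ^ 2 = (transpose M *v (M *v x)) \<bullet> x"
    by (simp add: power2_norm_eq_inner inner_matrix_vector_transpose)
  also have "\<dots> \<le> norm (transpose M *v (M *v x)) * norm x"
    using Cauchy_Schwarz_ineq2 abs_ge_self order_trans by blast
  also have "\<dots> \<le> ?c * norm (M *v x) * norm x"
    by (simp add: norm_matrix_vector_le_spec_norm mult_right_mono)
  finally have "norm (M *v x) * norm (M *v x) \<le> (?c * norm x) * norm (M *v x)"
    by (simp add: power2_eq_square algebra_simps)
  then show "norm (M *v x) \<le> ?c * norm x"
    using spec_norm_nonneg[of "transpose M"]
    by (cases "M *v x = 0") (simp_all add: mult_le_cancel_right)
qed

lemma spec_norm_transpose: "spec_norm (transpose (M::real^'n^'m)) = spec_norm M"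
  by (metis antisym spec_norm_le_transpose transpose_transpose)

lemma spec_norm_le_sqrt:
  fixes M :: "real^'n^'m"
  assumes "0 < a" "\<And>x. a * norm (M *v x) ^ 2 \<le> b * norm x ^ 2"
  shows "spec_norm M \<le> sqrt (b / a)"
  unfolding spec_norm_def
proof (rule onorm_le)
  fix x
  have "norm (M *v x) ^ 2 \<le> b / a * norm x ^ 2"
    using assms by (simp add: field_simps)
  then have "sqrt (norm (M *v x) ^ 2) \<le> sqrt (b / a * norm x ^ 2)"
    by (rule real_sqrt_le_mono)
  then show "norm (M *v x) \<le> sqrt (b / a) * norm x"
    by (metis abs_norm_cancel real_sqrt_abs real_sqrt_mult)
qed

lemma riccati_joseph_form:
  fixes A W \<Sigma> :: "real^'n^'n" and C :: "real^'n^'p" and V :: "real^'p^'p"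
    and L :: "real^'p^'n"
  assumes \<Sigma>_sym: "transpose \<Sigma> = \<Sigma>" and V_sym: "transpose V = V"
    and S_inv: "invertible (C ** \<Sigma> ** transpose C + V)"
    and DARE: "\<Sigma> = A ** \<Sigma> ** transpose A
        - A ** \<Sigma> ** transpose C ** matrix_inv (C ** \<Sigma> ** transpose C + V) ** C ** \<Sigma> ** transpose A
        + W"
    and L_def: "L = A ** \<Sigma> ** transpose C ** matrix_inv (C ** \<Sigma> ** transpose C + V)"
  shows "\<Sigma> = (A - L ** C) ** \<Sigma> ** transpose (A - L ** C) + L ** V ** transpose L + W"
proof -
  define S where "S = C ** \<Sigma> ** transpose C + V"
  define K where "K = L ** C ** \<Sigma> ** transpose A"
  have "transpose S = S"
    by (simp add: S_def transpose_add matrix_transpose_mul \<Sigma>_sym V_sym matrix_mul_assoc)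
  then have L_transpose: "transpose L = matrix_inv S ** C ** \<Sigma> ** transpose A"
    using S_inv
    by (simp add: L_def S_def matrix_transpose_mul transpose_matrix_inv_symmetric \<Sigma>_sym matrix_mul_assoc)
  have "L ** S = A ** \<Sigma> ** transpose C"
    using S_inv by (simp add: L_def S_def matrix_inv_inverse(2) flip: matrix_mul_assoc)
  then have LSL: "L ** S ** transpose L = K"
    unfolding L_transpose K_def by (simp add: L_def S_def matrix_mul_assoc)
  have "(A - L ** C) ** \<Sigma> ** transpose (A - L ** C) + L ** V ** transpose L
      = A ** \<Sigma> ** transpose A - A ** \<Sigma> ** transpose C ** transpose L - K + L ** S ** transpose L"
    by (simp add: K_def S_def transpose_diff matrix_transpose_mul \<Sigma>_sym matrix_diff_ldistrib
        matrix_diff_rdistrib matrix_add_ldistrib matrix_add_rdistrib matrix_mul_assoc)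
  also have "\<dots> = A ** \<Sigma> ** transpose A - K"
    using LSL unfolding L_transpose by (simp add: K_def L_def S_def matrix_mul_assoc)
  also have "\<dots> = \<Sigma> - W"
    using DARE[symmetric] by (simp add: K_def L_def S_def matrix_mul_assoc eq_diff_eq)
  finally show ?thesis by simp
qed

lemma riccati_quadratic_decrease:
  fixes A W \<Sigma> :: "real^'n^'n" and C :: "real^'n^'p" and V :: "real^'p^'p"
    and L :: "real^'p^'n"
  assumes \<Sigma>_psd: "psd \<Sigma>" and V_psd: "psd V" and "0 < a"
    and W_lo: "loewner_le (a *\<^sub>R mat 1) W" and V_lo: "loewner_le (a *\<^sub>R mat 1) V"
    and DARE: "\<Sigma> = A ** \<Sigma> ** transpose A
        - A ** \<Sigma> ** transpose C ** matrix_inv (C ** \<Sigma> ** transpose C + V) ** C ** \<Sigma> ** transpose A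
        + W"
    and L_def: "L = A ** \<Sigma> ** transpose C ** matrix_inv (C ** \<Sigma> ** transpose C + V)"
  shows "(transpose (A - L ** C) *v y) \<bullet> (\<Sigma> *v (transpose (A - L ** C) *v y))
      + a * norm (transpose L *v y) ^ 2 + a * norm y ^ 2 \<le> y \<bullet> (\<Sigma> *v y)"
proof -
  have \<Sigma>_quad: "0 \<le> x \<bullet> (\<Sigma> *v x)" for x
    using \<Sigma>_psd by (simp add: psd_def)
  have "a * norm x ^ 2 \<le> x \<bullet> ((C ** \<Sigma> ** transpose C + V) *v x)" for x
    using \<Sigma>_quad[of "transpose C *v x"] quadratic_form_ge_of_loewner_le[OF V_lo, of x]
    by (simp add: matrix_vector_mult_add_rdistrib inner_add_right quadratic_form_congruence)
  then have "invertible (C ** \<Sigma> ** transpose C + V)"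
    using \<open>0 < a\<close> by (rule invertible_of_coercive[rotated])
  with \<Sigma>_psd V_psd DARE L_def
  have "\<Sigma> = (A - L ** C) ** \<Sigma> ** transpose (A - L ** C) + L ** V ** transpose L + W"
    by (intro riccati_joseph_form) (simp_all add: psd_def)
  then have "y \<bullet> (\<Sigma> *v y) = (transpose (A - L ** C) *v y) \<bullet> (\<Sigma> *v (transpose (A - L ** C) *v y))
      + (transpose L *v y) \<bullet> (V *v (transpose L *v y)) + y \<bullet> (W *v y)"
    by (metis inner_add_right matrix_vector_mult_add_rdistrib quadratic_form_congruence)
  then show ?thesis
    using quadratic_form_ge_of_loewner_le[OF V_lo, of "transpose L *v y"]
      quadratic_form_ge_of_loewner_le[OF W_lo, of y]
    by linarith
qed

lemma quadratic_form_mat_pow_transpose_le: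
  fixes F P :: "real^'n^'n"
  assumes "0 \<le> r"
    and contraction: "\<And>y. (transpose F *v y) \<bullet> (P *v (transpose F *v y)) \<le> r * (y \<bullet> (P *v y))"
  shows "(transpose (mat_pow F k) *v y) \<bullet> (P *v (transpose (mat_pow F k) *v y)) \<le> r ^ k * (y \<bullet> (P *v y))"
proof (induction k arbitrary: y)
  case 0
  show ?case by simp
next
  case (Suc k)
  have "transpose (mat_pow F (Suc k)) *v y = transpose (mat_pow F k) *v (transpose F *v y)"
    by (simp add: matrix_transpose_mul matrix_vector_mul_assoc)
  then have "(transpose (mat_pow F (Suc k)) *v y) \<bullet> (P *v (transpose (mat_pow F (Suc k)) *v y))
      \<le> r ^ k * ((transpose F *v y) \<bullet> (P *v (transpose F *v y)))"
    using Suc.IH by simp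
  also have "\<dots> \<le> r ^ k * (r * (y \<bullet> (P *v y)))"
    using \<open>0 \<le> r\<close> contraction by (simp add: mult_left_mono)
  finally show ?case by (simp add: ac_simps)
qed

lemma spec_norm_mat_pow_le:
  fixes F P :: "real^'n^'n"
  assumes "0 < a" "0 \<le> r"
    and P_lo: "\<And>y. a * norm y ^ 2 \<le> y \<bullet> (P *v y)" and P_hi: "\<And>y. y \<bullet> (P *v y) \<le> b * norm y ^ 2"
    and contraction: "\<And>y. (transpose F *v y) \<bullet> (P *v (transpose F *v y)) \<le> r * (y \<bullet> (P *v y))"
  shows "spec_norm (mat_pow F k) \<le> sqrt (b / a) * sqrt r ^ k"
proof -
  have "spec_norm (transpose (mat_pow F k)) \<le> sqrt (r ^ k * b / a)"
  proof (rule spec_norm_le_sqrt[OF \<open>0 < a\<close>])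
    fix y
    let ?z = "transpose (mat_pow F k) *v y"
    have "a * norm ?z ^ 2 \<le> ?z \<bullet> (P *v ?z)" by (rule P_lo)
    also have "\<dots> \<le> r ^ k * (y \<bullet> (P *v y))"
      using \<open>0 \<le> r\<close> contraction by (rule quadratic_form_mat_pow_transpose_le)
    also have "\<dots> \<le> r ^ k * (b * norm y ^ 2)"
      using \<open>0 \<le> r\<close> P_hi by (simp add: mult_left_mono)
    finally show "a * norm ?z ^ 2 \<le> r ^ k * b * norm y ^ 2" by simp
  qed
  moreover have "sqrt (r ^ k * b / a) = sqrt (b / a) * sqrt r ^ k"
    unfolding real_sqrt_power[symmetric] real_sqrt_mult[symmetric] by (simp add: field_simps)
  ultimately show ?thesis by (simp add: spec_norm_transpose)
qed

lemma sqrt_one_minus_le: "(x::real) \<le> 2 \<Longrightarrow> sqrt (1 - x) \<le> 1 - x / 2"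
  by (rule real_le_lsqrt) (simp_all add: power2_eq_square algebra_simps)

lemma quadratic_contraction_of_decrease:
  fixes F P :: "real^'n^'n"
  assumes "0 \<le> a" "0 < b" "y \<bullet> (P *v y) \<le> b * norm y ^ 2"
    and "(transpose F *v y) \<bullet> (P *v (transpose F *v y)) + a * norm y ^ 2 \<le> y \<bullet> (P *v y)"
  shows "(transpose F *v y) \<bullet> (P *v (transpose F *v y)) \<le> (1 - a / b) * (y \<bullet> (P *v y))"
proof -
  have "a / b * (y \<bullet> (P *v y)) \<le> a * norm y ^ 2"
    using mult_left_mono[OF assms(3), of "a / b"] assms(1,2) by simp
  with assms(4) show ?thesis by (simp add: algebra_simps)
qed

lemma spec_norm_mat_pow_le_lyapunov:
  fixes F P :: "real^'n^'n"
  assumes "0 < a"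
    and P_lo: "\<And>y. a * norm y ^ 2 \<le> y \<bullet> (P *v y)" and P_hi: "\<And>y. y \<bullet> (P *v y) \<le> b * norm y ^ 2"
    and decrease: "\<And>y. (transpose F *v y) \<bullet> (P *v (transpose F *v y)) + a * norm y ^ 2 \<le> y \<bullet> (P *v y)"
  shows "spec_norm (mat_pow F k) \<le> sqrt (b / a) * (1 - a / (2 * b)) ^ k"
proof -
  have "a \<le> b" using P_lo P_hi by (rule quadratic_bounds_le)
  with \<open>0 < a\<close> have "0 < b" "a / b \<le> 1" by simp_all
  have "spec_norm (mat_pow F k) \<le> sqrt (b / a) * sqrt (1 - a / b) ^ k"
    using \<open>0 < a\<close> \<open>0 < b\<close> \<open>a / b \<le> 1\<close> P_hi decrease
    by (intro spec_norm_mat_pow_le[OF \<open>0 < a\<close> _ P_lo P_hi] quadratic_contraction_of_decrease) simp_all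
  also have "\<dots> \<le> sqrt (b / a) * (1 - a / (2 * b)) ^ k"
    using sqrt_one_minus_le[of "a / b"] \<open>0 < a\<close> \<open>0 < b\<close> \<open>a / b \<le> 1\<close>
    by (intro mult_left_mono power_mono) (simp_all add: mult.commute)
  finally show ?thesis .
qed

theorem lemmaE4:
  fixes A W \<Sigma> :: "real^'n^'n" and C :: "real^'n^'p" and V :: "real^'p^'p"
    and L :: "real^'p^'n"
    and \<alpha>\<^sub>0 \<alpha>\<^sub>1 \<psi> \<sigma> :: real
  assumes W_psd: "psd W" and V_psd: "psd V"
    and stab: "stabilizable A (psd_sqrt W)"
    and detect: "detectable A C"
    and Sigma_psd: "psd \<Sigma>"
    and DARE: "\<Sigma> = A ** \<Sigma> ** transpose A
        - A ** \<Sigma> ** transpose C ** matrix_inv (C ** \<Sigma> ** transpose C + V) ** C ** \<Sigma> ** transpose A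
        + W"
    and L_def: "L = A ** \<Sigma> ** transpose C ** matrix_inv (C ** \<Sigma> ** transpose C + V)"
    and pos: "\<alpha>\<^sub>0 > 0" "\<alpha>\<^sub>1 > 0" "\<psi> > 0" "\<sigma> > 0"
    and W_lo: "loewner_le (\<alpha>\<^sub>0 *\<^sub>R mat 1) W" and W_hi: "loewner_le W (\<alpha>\<^sub>1 *\<^sub>R mat 1)"
    and V_lo: "loewner_le (\<alpha>\<^sub>0 *\<^sub>R mat 1) V" and V_hi: "loewner_le V (\<alpha>\<^sub>1 *\<^sub>R mat 1)"
    and C_bd: "spec_norm C \<le> \<psi>"
    and Sigma_bd: "spec_norm \<Sigma> \<le> \<sigma>"
  shows "0 < 1 - \<alpha>\<^sub>0 / (2 * \<sigma>) \<and> 1 - \<alpha>\<^sub>0 / (2 * \<sigma>) < 1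
    \<and> (\<forall>k::nat. spec_norm (mat_pow (A - L ** C) k) \<le> sqrt (\<sigma> / \<alpha>\<^sub>0) * (1 - \<alpha>\<^sub>0 / (2 * \<sigma>)) ^ k)
    \<and> spec_norm L \<le> sqrt (\<sigma> / \<alpha>\<^sub>0)"
proof -
  have decrease: "(transpose (A - L ** C) *v y) \<bullet> (\<Sigma> *v (transpose (A - L ** C) *v y))
      + \<alpha>\<^sub>0 * norm (transpose L *v y) ^ 2 + \<alpha>\<^sub>0 * norm y ^ 2 \<le> y \<bullet> (\<Sigma> *v y)" for y
    using Sigma_psd V_psd pos(1) W_lo V_lo DARE L_def by (rule riccati_quadratic_decrease)
  have \<Sigma>_nonneg: "0 \<le> x \<bullet> (\<Sigma> *v x)" for x
    using Sigma_psd by (simp add: psd_def)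
  have \<Sigma>_hi: "y \<bullet> (\<Sigma> *v y) \<le> \<sigma> * norm y ^ 2" for y
    using quadratic_form_le_spec_norm[of y \<Sigma>] Sigma_bd by (meson mult_right_mono order_trans zero_le_power2)
  have \<Sigma>_lo: "\<alpha>\<^sub>0 * norm y ^ 2 \<le> y \<bullet> (\<Sigma> *v y)"
    and F_decrease: "(transpose (A - L ** C) *v y) \<bullet> (\<Sigma> *v (transpose (A - L ** C) *v y))
      + \<alpha>\<^sub>0 * norm y ^ 2 \<le> y \<bullet> (\<Sigma> *v y)"
    and L_decrease: "\<alpha>\<^sub>0 * norm (transpose L *v y) ^ 2 \<le> \<sigma> * norm y ^ 2" for y
    using decrease[of y] \<Sigma>_nonneg[of "transpose (A - L ** C) *v y"] \<Sigma>_hi[of y] pos(1)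
      zero_le_power2[of "norm y"] zero_le_power2[of "norm (transpose L *v y)"]
    by (smt (verit) mult_nonneg_nonneg)+
  have "spec_norm L \<le> sqrt (\<sigma> / \<alpha>\<^sub>0)"
    unfolding spec_norm_transpose[symmetric, of L] using pos(1) L_decrease by (rule spec_norm_le_sqrt)
  moreover have "spec_norm (mat_pow (A - L ** C) k) \<le> sqrt (\<sigma> / \<alpha>\<^sub>0) * (1 - \<alpha>\<^sub>0 / (2 * \<sigma>)) ^ k" for k
    using pos(1) \<Sigma>_lo \<Sigma>_hi F_decrease by (rule spec_norm_mat_pow_le_lyapunov)
  moreover have "\<alpha>\<^sub>0 \<le> \<sigma>"
    using \<Sigma>_lo \<Sigma>_hi by (rule quadratic_bounds_le)
  ultimately show ?thesis
    using pos by (simp add: field_simps)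
qed

end
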